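(* In the algorithm Mono-DMFW described in the context, let $\bar{\mathbf{x}}^{(k)}(q)=\frac1N\sum_{i=1}^N\mathbf{x}_i^{(k)}(q)$. If the weight matrix $\mathbf{A}$ is symmetric and doubly stochastic with $\beta<1$, then for any $k\in[K]$ and $q\in[Q]$, $$\sqrt{\sum_{i=1}^{N}\|\mathbf{x}_{i}^{(k)}(q)-\bar{\mathbf{x}}^{(k)}(q)\|^{2}}\le\frac{\sqrt{N}r(\mathcal{K})}{K(1-\beta)}.$$
   Context: $\mathcal{K}\subseteq\mathbb{R}^n$ is a bounded convex set with $r(\mathcal{K})=\max_{\mathbf{x}\in\mathcal{K}}\|\mathbf{x}\|$. $N$ nodes on a connected undirected graph with neighbor sets $\mathcal{N}_i$; weight matrix $\mathbf{A}=[a_{ij}]\in\mathbb{R}_+^{N\times N}$ with $a_{ij}=0$ if $j\notin\mathcal{N}_i\cup\{i\}$; $\beta=\max(|\lambda_2(\mathbf{A})|,|\lambda_N(\mathbf{A})|)$ for eigenvalues $1=\lambda_1\ge\dots\ge\lambda_N\ge-1$. In Mono-DMFW, for each block $q\in[Q]$, $\mathbf{x}_i^{(0)}(q)=\mathbf{0}$, and for $k=1,\dots,K$ each node $i$ receives a point $\mathbf{v}_i^{(k)}(q)\in\mathcal{K}$ (output of an online linear optimization oracle) and sets $\mathbf{x}_i^{(k)}(q)=\sum_{j\in\mathcal{N}_i\cup\{i\}}a_{ij}\mathbf{x}_j^{(k-1)}(q)+\frac1K\mathbf{v}_i^{(k)}(q)$. *)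

theory Defs
  imports "HOL-Analysis.Analysis" "Jordan_Normal_Form.Char_Poly"
begin

text \<open>Eigenvalues of a real matrix (with multiplicity), sorted in non-increasing
order: lambda_1 >= lambda_2 >= ... (list index i-1 holds lambda_i).\<close>
definition eigs_desc :: "real mat \<Rightarrow> real list" where
  "eigs_desc A = rev (sorted_list_of_multiset (proots (char_poly A)))"

definition beta_mat :: "nat \<Rightarrow> real mat \<Rightarrow> real" where
  "beta_mat N A = max \<bar>eigs_desc A ! 1\<bar> \<bar>eigs_desc A ! (N - 1)\<bar>"

definition rK :: "'v::real_normed_vector set \<Rightarrow> real" where
  "rK K = (SUP x\<in>K. norm x)"

definition undirected_graph :: "nat \<Rightarrow> (nat \<Rightarrow> nat set) \<Rightarrow> bool" where
  "undirected_graph N Nb \<longleftrightarrow>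
     (\<forall>i<N. Nb i \<subseteq> {..<N} \<and> i \<notin> Nb i) \<and> (\<forall>i<N. \<forall>j<N. j \<in> Nb i \<longleftrightarrow> i \<in> Nb j)"

definition connected_graph :: "nat \<Rightarrow> (nat \<Rightarrow> nat set) \<Rightarrow> bool" where
  "connected_graph N Nb \<longleftrightarrow>
     (\<forall>i<N. \<forall>j<N. (i, j) \<in> {(a, b). a < N \<and> b \<in> Nb a}\<^sup>*)"

fun dmfw_x :: "real mat \<Rightarrow> (nat \<Rightarrow> nat set) \<Rightarrow> nat \<Rightarrow>
    (nat \<Rightarrow> nat \<Rightarrow> nat \<Rightarrow> 'v::real_vector) \<Rightarrow> nat \<Rightarrow> nat \<Rightarrow> nat \<Rightarrow> 'v" where
  "dmfw_x A Nb K v q 0 i = 0"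
| "dmfw_x A Nb K v q (Suc k) i =
     (\<Sum>j\<in>Nb i \<union> {i}. (A $$ (i, j)) *\<^sub>R dmfw_x A Nb K v q k j) + (1 / real K) *\<^sub>R v q (Suc k) i"

end

theory Submission
  imports Defs
begin

text \<open>
  Write e(k) for the consensus error of the k-th iterates. Since A is doubly stochastic, averaging
  over the nodes commutes with the mixing step, so the deviations from the average evolve as
  d(k+1) = A d(k) + (v(k+1) - mean v(k+1)) / K. If A contracts zero-sum vectors by the factor beta,
  then e(k+1) <= beta e(k) + sqrt N r / K, and e(0) = 0 gives e(k) <= sqrt N r / (K (1 - beta)).

  The contraction is the spectral part. Let s be the supremum of |A y|^2 over zero-sum unit
  vectors y. Near-maximisers make A^2 - s almost singular on zero-sum vectors, so s is an
  eigenvalue of A^2 with a zero-sum eigenvector, and then sqrt s or -sqrt s is an eigenvalue of A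
  with a zero-sum eigenvector. As A is symmetric, its characteristic polynomial splits over the
  reals, and such an eigenvalue lies between lambda_N and lambda_2: it cannot be 1, since a
  zero-sum eigenvector for 1 together with the all-ones vector would make 1 a double root, forcing
  lambda_2 = 1. Hence sqrt s <= beta.
\<close>

no_notation Finite_Cartesian_Product.vec.vec_nth (infixl "$" 90)
no_notation scalar_prod (infix "\<bullet>" 70)

section \<open>Spectrum of real symmetric matrices\<close>

lemma proots_prod_linear_factors: "proots (\<Prod>a\<leftarrow>as. [:- a, 1:]) = mset (as :: 'a :: idom list)"
proof (induct as)
  case (Cons a as)
  have "(\<Prod>a\<leftarrow>as. [:- a, 1:]) \<noteq> 0" by (auto simp: prod_list_zero_iff)
  then have "proots (\<Prod>a\<leftarrow>a # as. [:- a, 1:]) = proots [:- a, 1:] + proots (\<Prod>a\<leftarrow>as. [:- a, 1:])"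
    unfolding list.map prod_list.Cons by (intro proots_mult) simp_all
  then show ?case using Cons by simp
qed simp

lemma eigenvalue_real_symmetric_Reals:
  fixes A :: "real mat"
  assumes A: "A \<in> carrier_mat n n" and sym: "\<forall>i<n. \<forall>j<n. A $$ (i, j) = A $$ (j, i)"
    and ev: "eigenvalue (map_mat complex_of_real A) c"
  shows "c \<in> \<real>"
proof -
  let ?Ac = "map_mat complex_of_real A"
  from ev obtain v where v: "v \<in> carrier_vec n" "v \<noteq> 0\<^sub>v n" "?Ac *\<^sub>v v = c \<cdot>\<^sub>v v"
    unfolding eigenvalue_def eigenvector_def using A by auto
  define S where "S = (\<Sum>i<n. \<Sum>j<n. cnj (v $ i) * complex_of_real (A $$ (i, j)) * v $ j)"
  define T where "T = (\<Sum>i<n. cnj (v $ i) * v $ i)"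
  have row: "(\<Sum>j<n. complex_of_real (A $$ (i, j)) * v $ j) = c * v $ i" if "i < n" for i
  proof -
    have "(?Ac *\<^sub>v v) $ i = (c \<cdot>\<^sub>v v) $ i" using v by simp
    then show ?thesis using that A v(1) by (simp add: scalar_prod_def atLeast0LessThan)
  qed
  have "S = (\<Sum>i<n. cnj (v $ i) * (\<Sum>j<n. complex_of_real (A $$ (i, j)) * v $ j))"
    unfolding S_def by (simp add: sum_distrib_left mult.assoc)
  also have "\<dots> = c * T" unfolding T_def using row by (simp add: sum_distrib_left ac_simps)
  finally have S_eq: "S = c * T" .
  have "cnj S = (\<Sum>i<n. \<Sum>j<n. v $ i * complex_of_real (A $$ (i, j)) * cnj (v $ j))"
    unfolding S_def by simp
  also have "\<dots> = (\<Sum>j<n. \<Sum>i<n. v $ i * complex_of_real (A $$ (i, j)) * cnj (v $ j))"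
    by (rule sum.swap)
  also have "\<dots> = S" unfolding S_def
    by (intro sum.cong refl) (use sym in \<open>auto simp: ac_simps\<close>)
  finally have S_real: "cnj S = S" .
  have T_eq: "T = complex_of_real (\<Sum>i<n. (cmod (v $ i))\<^sup>2)"
    unfolding T_def by (simp add: complex_norm_square mult.commute flip: of_real_power)
  have "T \<noteq> 0"
  proof
    assume "T = 0"
    then have "\<forall>i\<in>{..<n}. (cmod (v $ i))\<^sup>2 = 0"
      unfolding T_eq of_real_eq_0_iff by (subst (asm) sum_nonneg_eq_0_iff) auto
    then have "v = 0\<^sub>v n" using v(1) by (intro eq_vecI) auto
    with v(2) show False by simp
  qed
  moreover have "cnj c * T = c * T"
    using S_eq S_real T_eq by (metis complex_cnj_complex_of_real complex_cnj_mult)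
  ultimately show ?thesis by (simp add: Reals_cnj_iff)
qed

lemma char_poly_real_symmetric_splits:
  fixes A :: "real mat"
  assumes A: "A \<in> carrier_mat n n" and sym: "\<forall>i<n. \<forall>j<n. A $$ (i, j) = A $$ (j, i)"
  obtains as where "char_poly A = (\<Prod>a\<leftarrow>as. [:- a, 1:])" "length as = n"
proof -
  interpret of_real_poly: map_poly_inj_comm_ring_hom complex_of_real ..
  let ?Ac = "map_mat complex_of_real A"
  have Ac: "?Ac \<in> carrier_mat n n" using A by simp
  obtain cs where cs: "char_poly ?Ac = (\<Prod>c\<leftarrow>cs. [:- c, 1:])" "length cs = n"
    using char_poly_factorized[OF Ac] by blast
  have real_roots: "complex_of_real (Re c) = c" if "c \<in> set cs" for c
  proof -
    have "poly (char_poly ?Ac) c = 0" unfolding cs(1) using that by (rule linear_poly_root)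
    then have "eigenvalue ?Ac c" using eigenvalue_root_char_poly[OF Ac] by simp
    then show ?thesis using eigenvalue_real_symmetric_Reals[OF A sym] by (simp add: of_real_Re)
  qed
  have prod_Re: "map_poly complex_of_real (\<Prod>a\<leftarrow>map Re cs. [:- a, 1:]) = (\<Prod>c\<leftarrow>cs. [:- c, 1:])"
    using real_roots
  proof (induct cs)
    case (Cons c cs)
    have "map_poly complex_of_real (\<Prod>a\<leftarrow>map Re (c # cs). [:- a, 1:])
       = map_poly complex_of_real [:- Re c, 1:] * map_poly complex_of_real (\<Prod>a\<leftarrow>map Re cs. [:- a, 1:])"
      unfolding list.map prod_list.Cons by (rule of_real_poly.hom_mult)
    also have "map_poly complex_of_real [:- Re c, 1:] = [:- c, 1:]"
      using Cons(2)[of c] by simp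
    finally show ?case using Cons by simp
  qed simp
  have "map_poly complex_of_real (char_poly A) = char_poly ?Ac"
    by (rule of_real_hom.char_poly_hom[OF A, symmetric])
  also have "\<dots> = map_poly complex_of_real (\<Prod>a\<leftarrow>map Re cs. [:- a, 1:])"
    unfolding cs(1) prod_Re ..
  finally have "char_poly A = (\<Prod>a\<leftarrow>map Re cs. [:- a, 1:])" by (simp only: of_real_poly.eq_iff)
  with cs(2) show ?thesis by (intro that[of "map Re cs"]) simp_all
qed

lemma length_eigs_desc:
  assumes "A \<in> carrier_mat n n" and "\<forall>i<n. \<forall>j<n. A $$ (i, j) = A $$ (j, i)"
  shows "length (eigs_desc A) = n"
proof -
  obtain as where "char_poly A = (\<Prod>a\<leftarrow>as. [:- a, 1:])" "length as = n"
    using char_poly_real_symmetric_splits[OF assms] .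
  then show ?thesis
    unfolding eigs_desc_def by (simp flip: size_mset add: proots_prod_linear_factors)
qed

lemma eigs_desc_antimono:
  assumes "i \<le> j" and "j < length (eigs_desc A)"
  shows "eigs_desc A ! j \<le> eigs_desc A ! i"
  using assms by (intro sorted_rev_nth_mono) (simp_all add: eigs_desc_def)

lemma eigenvalue_in_eigs_desc:
  assumes A: "(A :: real mat) \<in> carrier_mat n n" and "eigenvalue A \<mu>"
  shows "\<mu> \<in> set (eigs_desc A)"
proof -
  have "poly (char_poly A) \<mu> = 0" using assms eigenvalue_root_char_poly[OF A] by simp
  moreover have "char_poly A \<noteq> 0" using degree_monic_char_poly[OF A] by auto
  ultimately show ?thesis unfolding eigs_desc_def by simp
qed

lemma multiple_root_le_second_eigs_desc:
  assumes A: "(A :: real mat) \<in> carrier_mat n n" and mult: "2 \<le> order \<mu> (char_poly A)"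
  shows "\<mu> \<le> eigs_desc A ! 1"
proof -
  have "char_poly A \<noteq> 0" using degree_monic_char_poly[OF A] by auto
  then have count: "2 \<le> count (mset (eigs_desc A)) \<mu>"
    using mult unfolding eigs_desc_def by (simp add: count_proots)
  then obtain x xs where L: "eigs_desc A = x # xs"
    by (cases "eigs_desc A") auto
  have "count (mset (x # xs)) \<mu> \<le> count (mset xs) \<mu> + 1" by simp
  then have "count (mset xs) \<mu> \<noteq> 0" using count unfolding L by linarith
  then have "\<mu> \<in> set xs" by (simp add: count_mset_0_iff)
  then obtain k where k: "k < length xs" "xs ! k = \<mu>" by (auto simp: in_set_conv_nth)
  then have "eigs_desc A ! Suc k \<le> eigs_desc A ! 1"
    by (intro eigs_desc_antimono) (simp_all add: L)
  with k show ?thesis by (simp add: L)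
qed

lemma nonsingular_mat_with_columns:
  fixes p u :: "'a :: field vec"
  assumes p: "p \<in> carrier_vec n" and u: "u \<in> carrier_vec n"
    and ab: "a < n" "b < n" "a \<noteq> b" and minor: "p $ a * u $ b - p $ b * u $ a \<noteq> 0"
  obtains P where "P \<in> carrier_mat n n" "det P \<noteq> 0" "col P a = p" "col P b = u"
proof
  define P where "P = mat n n (\<lambda>(i, j). if j = a then p $ i else if j = b then u $ i
    else if i = j then 1 else 0)"
  show P: "P \<in> carrier_mat n n" by (simp add: P_def)
  show "col P a = p" "col P b = u" by (rule eq_vecI; use p u ab in \<open>simp add: P_def\<close>)+
  show "det P \<noteq> 0"
  proof
    assume "det P = 0"
    then obtain w where w: "w \<in> carrier_vec n" "w \<noteq> 0\<^sub>v n" "P *\<^sub>v w = 0\<^sub>v n"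
      using det_0_iff_vec_prod_zero[OF P] by auto
    have Pw: "(P *\<^sub>v w) $ i = w $ a * p $ i + w $ b * u $ i + (if i \<noteq> a \<and> i \<noteq> b then w $ i else 0)"
      if i: "i < n" for i
    proof -
      have "(P *\<^sub>v w) $ i = (\<Sum>j\<in>{0..<n}. P $$ (i, j) * w $ j)"
        using i P w(1) by (simp add: mult_mat_vec_def scalar_prod_def)
      also have "\<dots> = (\<Sum>j\<in>{0..<n}. (if j = a then w $ a * p $ i else 0)
          + (if j = b then w $ b * u $ i else 0) + (if j = i \<and> i \<noteq> a \<and> i \<noteq> b then w $ i else 0))"
        using i ab by (intro sum.cong) (auto simp: P_def)
      finally show ?thesis using i ab by (simp add: sum.distrib)
    qed
    have ea: "w $ a * p $ a + w $ b * u $ a = 0" and eb: "w $ a * p $ b + w $ b * u $ b = 0"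
      using Pw[OF ab(1)] Pw[OF ab(2)] w(3) ab by simp_all
    have "w $ a * (p $ a * u $ b - p $ b * u $ a) = u $ b * (w $ a * p $ a + w $ b * u $ a)
        - u $ a * (w $ a * p $ b + w $ b * u $ b)"
      and "w $ b * (p $ a * u $ b - p $ b * u $ a) = p $ a * (w $ a * p $ b + w $ b * u $ b)
        - p $ b * (w $ a * p $ a + w $ b * u $ a)"
      by (simp_all add: algebra_simps)
    then have "w $ a * (p $ a * u $ b - p $ b * u $ a) = 0" "w $ b * (p $ a * u $ b - p $ b * u $ a) = 0"
      unfolding ea eb by simp_all
    with minor have "w $ a = 0" "w $ b = 0" by simp_all
    then have "w $ i = 0" if "i < n" for i using Pw[OF that] w(3) that by (auto split: if_splits)
    then have "w = 0\<^sub>v n" using w(1) by (intro eq_vecI) auto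
    with w(2) show False by simp
  qed
qed

lemma sq_dvd_char_poly_two_zero_columns:
  fixes C :: "'a :: idom mat"
  assumes C: "C \<in> carrier_mat n n" and ab: "a < n" "b < n" "a \<noteq> b"
    and zero: "\<And>i. i < n \<Longrightarrow> C $$ (i, a) = 0" "\<And>i. i < n \<Longrightarrow> C $$ (i, b) = 0"
  shows "[:0, 1:] ^ 2 dvd char_poly C"
proof -
  define D where "D = mat_delete C a a"
  define b' where "b' = (if b < a then b else b - 1)"
  have D: "D \<in> carrier_mat (n - 1) (n - 1)" unfolding D_def using C by (rule mat_delete_carrier)
  have b': "b' < n - 1" using ab unfolding b'_def by auto
  have "D $$ (i, b') = 0" if "i < n - 1" for i
    using that b' C ab zero(2)[of "if i < a then i else Suc i"]
    unfolding D_def b'_def mat_delete_def by auto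
  then have "char_poly D = [:0, 1:] * char_poly (mat_delete D b' b')"
    using char_poly_0_column[OF _ D b'] by (simp add: x_as_monom)
  moreover have "char_poly C = [:0, 1:] * char_poly D"
    using char_poly_0_column[OF zero(1) C ab(1)] unfolding D_def by (simp add: x_as_monom)
  ultimately have "char_poly C = [:0, 1:] ^ 2 * char_poly (mat_delete D b' b')"
    by (simp add: power2_eq_square)
  then show ?thesis by (metis dvd_triv_left)
qed

lemma char_poly_pcompose_char_matrix:
  fixes A :: "'a :: field_char_0 mat"
  assumes A: "A \<in> carrier_mat n n"
  shows "char_poly A = pcompose (char_poly (char_matrix A \<mu>)) [:- \<mu>, 1:]"
proof -
  have B: "char_matrix A \<mu> \<in> carrier_mat n n" using A by simp
  have "poly (char_poly A) t = poly (char_poly (char_matrix A \<mu>)) (t - \<mu>)" for t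
  proof -
    have "char_matrix (char_matrix A \<mu>) (t - \<mu>) = char_matrix A t"
      unfolding char_matrix_def using A by (intro eq_matI) (auto simp: algebra_simps)
    then show ?thesis using char_poly_matrix[OF A, of t] char_poly_matrix[OF B, of "t - \<mu>"] by simp
  qed
  then show ?thesis unfolding poly_eq_poly_eq_iff[symmetric] by (auto simp: poly_pcompose)
qed

lemma order_char_poly_ge_two:
  fixes A :: "'a :: field_char_0 mat"
  assumes A: "A \<in> carrier_mat n n" and p: "eigenvector A p \<mu>" and u: "eigenvector A u \<mu>"
    and ab: "a < n" "b < n" "a \<noteq> b" and minor: "p $ a * u $ b - p $ b * u $ a \<noteq> 0"
  shows "2 \<le> order \<mu> (char_poly A)"
proof -
  define B where "B = char_matrix A \<mu>"
  have B: "B \<in> carrier_mat n n" using A by (simp add: B_def)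
  have vecs: "p \<in> carrier_vec n" "u \<in> carrier_vec n" and kernel: "B *\<^sub>v p = 0\<^sub>v n" "B *\<^sub>v u = 0\<^sub>v n"
    using p u unfolding eigenvector_char_matrix[OF A] B_def by auto
  obtain P where P: "P \<in> carrier_mat n n" "det P \<noteq> 0" and cols: "col P a = p" "col P b = u"
    using nonsingular_mat_with_columns[OF vecs ab minor] .
  obtain Q where Q: "Q \<in> carrier_mat n n" "P * Q = 1\<^sub>m n" "Q * P = 1\<^sub>m n"
    using det_non_zero_imp_unit[OF P, of undefined] unfolding Units_def ring_mat_def by auto
  \<comment> \<open>In a basis whose columns a and b are the two eigenvectors, \<open>char_matrix A \<mu>\<close> has two
    zero columns.\<close>
  define C where "C = Q * B * P"
  have C: "C \<in> carrier_mat n n" using Q B P by (simp add: C_def)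
  have "P * C * Q = (P * Q) * B * (P * Q)"
    unfolding C_def using P Q(1) B by (simp add: assoc_mult_mat[of _ n n _ n _ n])
  then have "B = P * C * Q" using Q B by simp
  then have "similar_mat B C" unfolding similar_mat_def similar_mat_wit_def Let_def
    using B C P Q by blast
  then have cp: "char_poly B = char_poly C" by (rule char_poly_similar)
  have col_C: "C $$ (i, j) = (Q *\<^sub>v (B *\<^sub>v col P j)) $ i" if "i < n" "j < n" for i j
  proof -
    have "col C j = (Q * B) *\<^sub>v col P j" unfolding C_def
      by (rule col_mult2[OF _ P(1) that(2), of _ n]) (use Q B in simp)
    also have "\<dots> = Q *\<^sub>v (B *\<^sub>v col P j)" using Q B P that by (intro assoc_mult_mat_vec) auto
    finally show ?thesis using C that by (metis col_def index_vec carrier_matD)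
  qed
  have "[:0, 1:] ^ 2 dvd char_poly C"
    by (rule sq_dvd_char_poly_two_zero_columns[OF C ab])
      (use col_C cols kernel Q ab in simp_all)
  then have "pcompose ([:0, 1:] ^ 2) [:- \<mu>, 1:] dvd char_poly A"
    unfolding char_poly_pcompose_char_matrix[OF A, of \<mu>] B_def[symmetric] cp
    by (metis dvd_def pcompose_mult)
  then have "[:- \<mu>, 1:] ^ 2 dvd char_poly A" by (simp add: pcompose_pCons power2_eq_square pcompose_mult)
  moreover have "char_poly A \<noteq> 0" using degree_monic_char_poly[OF A] by auto
  ultimately show ?thesis by (simp add: order_divides)
qed

lemma zero_sum_vec_nonconstant:
  fixes u :: "'a :: field_char_0 vec"
  assumes u: "u \<in> carrier_vec n" "u \<noteq> 0\<^sub>v n" and sum: "(\<Sum>i<n. u $ i) = 0"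
  obtains a b where "a < n" "b < n" "u $ a \<noteq> u $ b"
proof -
  obtain b where b: "b < n" "u $ b \<noteq> 0"
    using u by (metis carrier_vecD eq_vecI index_zero_vec)
  have "\<exists>a<n. u $ a \<noteq> u $ b"
  proof (rule ccontr)
    assume "\<not> ?thesis"
    then have "(\<Sum>i<n. u $ i) = of_nat n * u $ b" by simp
    with sum b show False by simp
  qed
  with b that show ?thesis by blast
qed

lemma abs_eigenvalue_le_beta_mat:
  fixes A :: "real mat"
  assumes A: "A \<in> carrier_mat n n" and sym: "\<forall>i<n. \<forall>j<n. A $$ (i, j) = A $$ (j, i)"
    and ones: "A *\<^sub>v vec n (\<lambda>_. 1) = vec n (\<lambda>_. 1)" and beta: "beta_mat n A < 1"
    and u: "eigenvector A u \<mu>" and sum: "(\<Sum>i<n. u $ i) = 0"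
  shows "\<bar>\<mu>\<bar> \<le> beta_mat n A"
proof -
  define L where "L = eigs_desc A"
  have len: "length L = n" unfolding L_def by (rule length_eigs_desc[OF A sym])
  have second: "L ! 1 < 1" using beta unfolding beta_mat_def L_def by linarith
  have u_vec: "u \<in> carrier_vec n" "u \<noteq> 0\<^sub>v n" using u A unfolding eigenvector_def by auto
  obtain a b where ab: "a < n" "b < n" "u $ a \<noteq> u $ b"
    using zero_sum_vec_nonconstant[OF u_vec sum] .
  have "vec n (\<lambda>_. 1) \<noteq> (0\<^sub>v n :: real vec)"
    using ab(1) by (metis index_vec index_zero_vec(1) zero_neq_one)
  then have ones_ev: "eigenvector A (vec n (\<lambda>_. 1)) 1"
    unfolding eigenvector_def using A ones by auto
  have "1 \<in> set L" "\<mu> \<in> set L"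
    using eigenvalue_in_eigs_desc[OF A] ones_ev u unfolding L_def eigenvalue_def by blast+
  then obtain i j where i: "i < n" "L ! i = 1" and j: "j < n" "L ! j = \<mu>"
    using len by (auto simp: in_set_conv_nth)
  have "\<mu> \<noteq> 1"
  proof
    assume "\<mu> = 1"
    then have "2 \<le> order 1 (char_poly A)"
      using ab ones_ev u by (intro order_char_poly_ge_two[OF A ones_ev, of u a b]) auto
    then have "1 \<le> L ! 1" unfolding L_def by (rule multiple_root_le_second_eigs_desc[OF A])
    with second show False by simp
  qed
  have "j \<noteq> 0"
  proof
    assume "j = 0"
    have "i \<noteq> 0"
    proof
      assume "i = 0"
      with i j \<open>j = 0\<close> \<open>\<mu> \<noteq> 1\<close> show False by simp
    qed
    then have "L ! i \<le> L ! 1" using i len unfolding L_def by (intro eigs_desc_antimono) auto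
    with i second show False by simp
  qed
  then have "L ! (n - 1) \<le> L ! j" "L ! j \<le> L ! 1"
    using j len unfolding L_def by (auto intro: eigs_desc_antimono)
  then show ?thesis using j unfolding beta_mat_def L_def by linarith
qed

section \<open>Contraction of the mixing operator on zero-sum vectors\<close>

definition doubly_stochastic :: "nat \<Rightarrow> real mat \<Rightarrow> bool" where
  "doubly_stochastic N A \<longleftrightarrow> (\<forall>i<N. \<forall>j<N. 0 \<le> A $$ (i, j)) \<and>
     (\<forall>i<N. (\<Sum>j<N. A $$ (i, j)) = 1) \<and> (\<forall>j<N. (\<Sum>i<N. A $$ (i, j)) = 1)"

definition mat_apply :: "real mat \<Rightarrow> nat \<Rightarrow> (nat \<Rightarrow> 'v::real_vector) \<Rightarrow> nat \<Rightarrow> 'v" where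
  "mat_apply A N x i = (\<Sum>j<N. A $$ (i, j) *\<^sub>R x j)"

definition sum_sq_norm :: "nat \<Rightarrow> (nat \<Rightarrow> 'v::real_normed_vector) \<Rightarrow> real" where
  "sum_sq_norm N x = (\<Sum>i<N. (norm (x i))\<^sup>2)"

lemma sum_sq_norm_real: "sum_sq_norm N y = (\<Sum>i<N. (y i)\<^sup>2)" for y :: "nat \<Rightarrow> real"
  by (simp add: sum_sq_norm_def)

lemma sum_sq_norm_nonneg: "0 \<le> sum_sq_norm N x"
  by (simp add: sum_sq_norm_def sum_nonneg)

lemma sum_sq_norm_eq_0_iff: "sum_sq_norm N x = 0 \<longleftrightarrow> (\<forall>i<N. x i = 0)"
  by (auto simp: sum_sq_norm_def sum_nonneg_eq_0_iff)

lemma sum_sq_norm_scaleR: "sum_sq_norm N (\<lambda>i. c *\<^sub>R x i) = c\<^sup>2 * sum_sq_norm N x"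
  by (simp add: sum_sq_norm_def sum_distrib_left power_mult_distrib)

lemma sum_sq_norm_cong: "(\<And>i. i < N \<Longrightarrow> x i = y i) \<Longrightarrow> sum_sq_norm N x = sum_sq_norm N y"
  by (simp add: sum_sq_norm_def)

lemma mat_apply_scaleR: "mat_apply A N (\<lambda>j. c *\<^sub>R x j) i = c *\<^sub>R mat_apply A N x i"
  by (simp add: mat_apply_def scaleR_sum_right mult.commute)

lemma sum_mat_apply:
  assumes "\<forall>j<N. (\<Sum>i<N. A $$ (i, j)) = 1"
  shows "(\<Sum>i<N. mat_apply A N x i) = (\<Sum>j<N. x j)"
proof -
  have "(\<Sum>i<N. mat_apply A N x i) = (\<Sum>j<N. (\<Sum>i<N. A $$ (i, j)) *\<^sub>R x j)"
    unfolding mat_apply_def by (subst sum.swap) (simp add: scaleR_sum_left)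
  then show ?thesis using assms by simp
qed

lemma mult_mat_vec_eq_mat_apply:
  assumes "A \<in> carrier_mat N N" and "i < N"
  shows "(A *\<^sub>v vec N y) $ i = mat_apply A N y i"
  using assms by (simp add: mult_mat_vec_def scalar_prod_def mat_apply_def atLeast0LessThan)

lemma mat_apply_symmetric:
  fixes y z :: "nat \<Rightarrow> real"
  assumes "\<forall>i<N. \<forall>j<N. A $$ (i, j) = A $$ (j, i)"
  shows "(\<Sum>i<N. mat_apply A N y i * z i) = (\<Sum>i<N. y i * mat_apply A N z i)"
proof -
  have "(\<Sum>i<N. mat_apply A N y i * z i) = (\<Sum>i<N. \<Sum>j<N. A $$ (i, j) * y j * z i)"
    unfolding mat_apply_def by (simp add: sum_distrib_right)
  also have "\<dots> = (\<Sum>j<N. \<Sum>i<N. A $$ (i, j) * y j * z i)" by (rule sum.swap)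
  also have "\<dots> = (\<Sum>i<N. y i * mat_apply A N z i)"
    unfolding mat_apply_def using assms by (simp add: sum_distrib_left ac_simps)
  finally show ?thesis .
qed

lemma sq_convex_combination_le:
  fixes w y :: "nat \<Rightarrow> real"
  assumes "\<forall>j<N. 0 \<le> w j" and "(\<Sum>j<N. w j) = 1"
  shows "(\<Sum>j<N. w j * y j)\<^sup>2 \<le> (\<Sum>j<N. w j * (y j)\<^sup>2)"
proof -
  define m where "m = (\<Sum>j<N. w j * y j)"
  have "0 \<le> (\<Sum>j<N. w j * (y j - m)\<^sup>2)" using assms by (intro sum_nonneg) auto
  also have "\<dots> = (\<Sum>j<N. w j * (y j)\<^sup>2) - 2 * m * (\<Sum>j<N. w j * y j) + m\<^sup>2 * (\<Sum>j<N. w j)"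
    by (simp add: power2_diff algebra_simps sum.distrib sum_subtractf sum_distrib_left sum_distrib_right)
  also have "\<dots> = (\<Sum>j<N. w j * (y j)\<^sup>2) - m\<^sup>2"
    using assms unfolding m_def by (simp add: power2_eq_square)
  finally show ?thesis unfolding m_def by simp
qed

lemma sum_sq_norm_mat_apply_le:
  fixes y :: "nat \<Rightarrow> real"
  assumes "doubly_stochastic N A"
  shows "sum_sq_norm N (mat_apply A N y) \<le> sum_sq_norm N y"
proof -
  have "sum_sq_norm N (mat_apply A N y) \<le> (\<Sum>i<N. \<Sum>j<N. A $$ (i, j) * (y j)\<^sup>2)"
    unfolding sum_sq_norm_real mat_apply_def using assms
    by (intro sum_mono) (simp add: sq_convex_combination_le doubly_stochastic_def)
  also have "\<dots> = (\<Sum>j<N. (\<Sum>i<N. A $$ (i, j)) * (y j)\<^sup>2)"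
    by (subst sum.swap) (simp add: sum_distrib_right)
  also have "\<dots> = sum_sq_norm N y"
    using assms unfolding doubly_stochastic_def sum_sq_norm_real by simp
  finally show ?thesis .
qed

lemma det_eq_0_if_approx_null:
  fixes M :: "real mat"
  assumes M: "M \<in> carrier_mat N N"
    and approx: "\<forall>\<epsilon>>0. \<exists>y :: nat \<Rightarrow> real. sum_sq_norm N y = 1 \<and>
      sum_sq_norm N (\<lambda>i. (M *\<^sub>v vec N y) $ i) < \<epsilon>"
  shows "det M = 0"
proof (rule ccontr)
  assume "det M \<noteq> 0"
  then obtain R where R: "R \<in> carrier_mat N N" "R * M = 1\<^sub>m N"
    using det_non_zero_imp_unit[OF M, of undefined] unfolding Units_def ring_mat_def by auto
  define c where "c = (\<Sum>i<N. \<Sum>j<N. (R $$ (i, j))\<^sup>2)"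
  have c: "0 \<le> c" unfolding c_def by (intro sum_nonneg) auto
  have bound: "sum_sq_norm N y \<le> c * sum_sq_norm N (\<lambda>i. (M *\<^sub>v vec N y) $ i)" for y
  proof -
    let ?My = "M *\<^sub>v vec N y"
    have y: "y i = (\<Sum>j<N. R $$ (i, j) * ?My $ j)" if i: "i < N" for i
    proof -
      have "vec N y = (R * M) *\<^sub>v vec N y" using R by simp
      also have "\<dots> = R *\<^sub>v ?My" using R M by (intro assoc_mult_mat_vec) auto
      finally have "vec N y $ i = (R *\<^sub>v ?My) $ i" by simp
      then show ?thesis using i R M by (simp add: mult_mat_vec_def scalar_prod_def atLeast0LessThan)
    qed
    have "sum_sq_norm N y \<le> (\<Sum>i<N. (\<Sum>j<N. (R $$ (i, j))\<^sup>2) * (\<Sum>j<N. (?My $ j)\<^sup>2))"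
      unfolding sum_sq_norm_real
    proof (rule sum_mono)
      fix i assume "i \<in> {..<N}"
      then have "(y i)\<^sup>2 = (\<Sum>j<N. R $$ (i, j) * ?My $ j)\<^sup>2" using y by simp
      also have "\<dots> \<le> (\<Sum>j<N. (R $$ (i, j))\<^sup>2) * (\<Sum>j<N. (?My $ j)\<^sup>2)"
        by (rule Cauchy_Schwarz_ineq_sum)
      finally show "(y i)\<^sup>2 \<le> (\<Sum>j<N. (R $$ (i, j))\<^sup>2) * (\<Sum>j<N. (?My $ j)\<^sup>2)" .
    qed
    then show ?thesis unfolding c_def sum_sq_norm_real by (simp add: sum_distrib_right)
  qed
  have "0 < 1 / (c + 1)" using c by simp
  then obtain y :: "nat \<Rightarrow> real" where y: "sum_sq_norm N y = 1"
    and small: "sum_sq_norm N (\<lambda>i. (M *\<^sub>v vec N y) $ i) < 1 / (c + 1)"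
    using approx by blast
  have "1 \<le> c * sum_sq_norm N (\<lambda>i. (M *\<^sub>v vec N y) $ i)" using bound[of y] y by simp
  also have "\<dots> \<le> c * (1 / (c + 1))" using small c by (intro mult_left_mono) auto
  also have "\<dots> < 1" using c by (simp add: field_simps)
  finally show False by simp
qed

lemma sum_sq_norm_mat_apply_le_homogeneous:
  fixes y :: "nat \<Rightarrow> real"
  assumes unit: "\<forall>z :: nat \<Rightarrow> real. (\<Sum>i<N. z i) = 0 \<and> sum_sq_norm N z = 1 \<longrightarrow>
      sum_sq_norm N (mat_apply A N z) \<le> s"
    and y: "(\<Sum>i<N. y i) = 0"
  shows "sum_sq_norm N (mat_apply A N y) \<le> s * sum_sq_norm N y"
proof (cases "sum_sq_norm N y = 0")
  case True
  then have "mat_apply A N y i = 0" if "i < N" for i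
    using that unfolding sum_sq_norm_eq_0_iff mat_apply_def by simp
  then have "sum_sq_norm N (mat_apply A N y) = 0" by (simp add: sum_sq_norm_eq_0_iff)
  with True show ?thesis by simp
next
  case False
  define c where "c = 1 / sqrt (sum_sq_norm N y)"
  have pos: "0 < sum_sq_norm N y" using False sum_sq_norm_nonneg[of N y] by simp
  have "(\<Sum>i<N. c * y i) = 0" using y by (simp flip: sum_distrib_left)
  moreover have "sum_sq_norm N (\<lambda>i. c * y i) = 1"
    using sum_sq_norm_scaleR[of N c y] pos by (simp add: c_def power_divide)
  ultimately have "sum_sq_norm N (mat_apply A N (\<lambda>i. c * y i)) \<le> s" using unit by blast
  moreover have "mat_apply A N (\<lambda>i. c * y i) = (\<lambda>i. c * mat_apply A N y i)"
    using mat_apply_scaleR[of A N c y] by auto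
  then have "sum_sq_norm N (mat_apply A N (\<lambda>i. c * y i)) = c\<^sup>2 * sum_sq_norm N (mat_apply A N y)"
    using sum_sq_norm_scaleR[of N c "mat_apply A N y"] by simp
  ultimately show ?thesis using pos by (simp add: c_def power_divide divide_le_eq mult.commute)
qed

lemma sum_sq_norm_square_minus_le:
  fixes y :: "nat \<Rightarrow> real"
  assumes sym: "\<forall>i<N. \<forall>j<N. A $$ (i, j) = A $$ (j, i)"
    and ub: "sum_sq_norm N (mat_apply A N (mat_apply A N y)) \<le> s * sum_sq_norm N (mat_apply A N y)"
  shows "sum_sq_norm N (\<lambda>i. mat_apply A N (mat_apply A N y) i - s * y i)
    \<le> s * (s * sum_sq_norm N y - sum_sq_norm N (mat_apply A N y))"
proof -
  let ?Ay = "mat_apply A N y" let ?AAy = "mat_apply A N ?Ay"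
  have adj: "(\<Sum>i<N. ?AAy i * y i) = sum_sq_norm N ?Ay"
    using mat_apply_symmetric[OF sym, of ?Ay y] by (simp add: sum_sq_norm_real power2_eq_square)
  have "sum_sq_norm N (\<lambda>i. ?AAy i - s * y i)
      = sum_sq_norm N ?AAy - 2 * s * (\<Sum>i<N. ?AAy i * y i) + s\<^sup>2 * sum_sq_norm N y"
    unfolding sum_sq_norm_real
    by (simp add: power2_diff power_mult_distrib sum.distrib sum_subtractf sum_distrib_left algebra_simps)
  then show ?thesis using ub unfolding adj by (simp add: algebra_simps power2_eq_square)
qed

text \<open>On zero-sum vectors
  it acts as \<open>A * A - s I\<close>, and the rank-one term forces its null vectors to sum to zero.\<close>

definition deflated_square_shift :: "real mat \<Rightarrow> nat \<Rightarrow> real \<Rightarrow> real mat" where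
  "deflated_square_shift A N s = mat N N (\<lambda>(i, j). (\<Sum>k<N. A $$ (i, k) * A $$ (k, j))
    - (if i = j then s else 0) + s / real N)"

lemma deflated_square_shift_mult_vec:
  assumes i: "i < N"
  shows "(deflated_square_shift A N s *\<^sub>v vec N y) $ i
    = mat_apply A N (mat_apply A N y) i - s * y i + s / real N * (\<Sum>j<N. y j)"
proof -
  have "(deflated_square_shift A N s *\<^sub>v vec N y) $ i = (\<Sum>j<N. ((\<Sum>k<N. A $$ (i, k) * A $$ (k, j))
      - (if i = j then s else 0) + s / real N) * y j)"
    using i by (simp add: mult_mat_vec_def scalar_prod_def atLeast0LessThan deflated_square_shift_def)
  also have "\<dots> = (\<Sum>j<N. (\<Sum>k<N. A $$ (i, k) * A $$ (k, j)) * y j)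
      - (\<Sum>j<N. (if i = j then s else 0) * y j) + (\<Sum>j<N. s / real N * y j)"
    by (simp add: algebra_simps sum.distrib sum_subtractf)
  also have "(\<Sum>j<N. (if i = j then s else 0) * y j) = (\<Sum>j<N. if j = i then s * y i else 0)"
    by (rule sum.cong) auto
  also have "(\<Sum>j<N. (\<Sum>k<N. A $$ (i, k) * A $$ (k, j)) * y j) = mat_apply A N (mat_apply A N y) i"
    unfolding mat_apply_def by (simp add: sum_distrib_left sum_distrib_right ac_simps) (rule sum.swap)
  finally show ?thesis using i by (simp add: sum_distrib_left)
qed

lemma null_vector_deflated_square_shift:
  fixes z :: "nat \<Rightarrow> real"
  assumes cols: "\<forall>j<N. (\<Sum>i<N. A $$ (i, j)) = 1" and N: "0 < N"
    and null: "deflated_square_shift A N s *\<^sub>v vec N z = 0\<^sub>v N"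
  shows "(\<Sum>i<N. z i) = 0" and "\<forall>i<N. mat_apply A N (mat_apply A N z) i = s * z i"
proof -
  have Mz: "mat_apply A N (mat_apply A N z) i - s * z i + s / real N * (\<Sum>j<N. z j) = 0" if "i < N" for i
    using deflated_square_shift_mult_vec[OF that, of A s z] null that by simp
  have "(\<Sum>i<N. mat_apply A N (mat_apply A N z) i - s * z i + s / real N * (\<Sum>j<N. z j)) = (\<Sum>j<N. z j)"
    using N by (simp add: sum.distrib sum_subtractf sum_mat_apply[OF cols] flip: sum_distrib_left)
  then show z_sum: "(\<Sum>j<N. z j) = 0" using Mz by simp
  show "\<forall>i<N. mat_apply A N (mat_apply A N z) i = s * z i" using Mz z_sum by simp
qed

lemma det_deflated_square_shift_eq_0:
  fixes A :: "real mat"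
  assumes sym: "\<forall>i<N. \<forall>j<N. A $$ (i, j) = A $$ (j, i)" and cols: "\<forall>j<N. (\<Sum>i<N. A $$ (i, j)) = 1"
    and s: "0 < s"
    and ub: "\<forall>y :: nat \<Rightarrow> real. (\<Sum>i<N. y i) = 0 \<longrightarrow>
      sum_sq_norm N (mat_apply A N y) \<le> s * sum_sq_norm N y"
    and approx: "\<forall>\<epsilon>>0. \<exists>y :: nat \<Rightarrow> real. (\<Sum>i<N. y i) = 0 \<and> sum_sq_norm N y = 1 \<and>
      s - \<epsilon> < sum_sq_norm N (mat_apply A N y)"
  shows "det (deflated_square_shift A N s) = 0"
proof (rule det_eq_0_if_approx_null)
  show "deflated_square_shift A N s \<in> carrier_mat N N" by (simp add: deflated_square_shift_def)
  show "\<forall>\<epsilon>>0. \<exists>y. sum_sq_norm N y = 1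
      \<and> sum_sq_norm N (\<lambda>i. (deflated_square_shift A N s *\<^sub>v vec N y) $ i) < \<epsilon>"
  proof (intro allI impI)
    fix \<epsilon> :: real assume "0 < \<epsilon>"
    then obtain y :: "nat \<Rightarrow> real" where y: "(\<Sum>i<N. y i) = 0" "sum_sq_norm N y = 1"
      and near: "s - \<epsilon> / s < sum_sq_norm N (mat_apply A N y)"
      using approx s by (meson divide_pos_pos)
    have "sum_sq_norm N (\<lambda>i. (deflated_square_shift A N s *\<^sub>v vec N y) $ i)
        = sum_sq_norm N (\<lambda>i. mat_apply A N (mat_apply A N y) i - s * y i)"
      by (rule sum_sq_norm_cong) (simp add: deflated_square_shift_mult_vec y)
    also have "\<dots> \<le> s * (s - sum_sq_norm N (mat_apply A N y))"
      using sum_sq_norm_square_minus_le[OF sym, where s = s and y = y] ub sum_mat_apply[OF cols, of y] y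
      by simp
    also have "\<dots> < s * (\<epsilon> / s)" using near s by (intro mult_strict_left_mono) auto
    finally show "\<exists>y. sum_sq_norm N y = 1
        \<and> sum_sq_norm N (\<lambda>i. (deflated_square_shift A N s *\<^sub>v vec N y) $ i) < \<epsilon>"
      using y s by auto
  qed
qed

lemma eigenvector_of_square_at_sup:
  fixes A :: "real mat"
  assumes N: "0 < N" and sym: "\<forall>i<N. \<forall>j<N. A $$ (i, j) = A $$ (j, i)"
    and cols: "\<forall>j<N. (\<Sum>i<N. A $$ (i, j)) = 1" and s: "0 < s"
    and ub: "\<forall>y :: nat \<Rightarrow> real. (\<Sum>i<N. y i) = 0 \<longrightarrow>
      sum_sq_norm N (mat_apply A N y) \<le> s * sum_sq_norm N y"
    and approx: "\<forall>\<epsilon>>0. \<exists>y :: nat \<Rightarrow> real. (\<Sum>i<N. y i) = 0 \<and> sum_sq_norm N y = 1 \<and>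
      s - \<epsilon> < sum_sq_norm N (mat_apply A N y)"
  obtains z :: "nat \<Rightarrow> real" where "(\<Sum>i<N. z i) = 0" "\<exists>i<N. z i \<noteq> 0"
    "\<forall>i<N. mat_apply A N (mat_apply A N z) i = s * z i"
proof -
  have M: "deflated_square_shift A N s \<in> carrier_mat N N" by (simp add: deflated_square_shift_def)
  obtain v where v: "v \<in> carrier_vec N" "v \<noteq> 0\<^sub>v N" "deflated_square_shift A N s *\<^sub>v v = 0\<^sub>v N"
    using det_0_iff_vec_prod_zero[OF M] det_deflated_square_shift_eq_0[OF sym cols s ub approx] by auto
  define z where "z i = v $ i" for i
  have vz: "v = vec N z" unfolding z_def using v(1) by (intro eq_vecI) auto
  have "\<exists>i<N. z i \<noteq> 0"
  proof (rule ccontr)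
    assume "\<not> (\<exists>i<N. z i \<noteq> 0)"
    then have "vec N z = 0\<^sub>v N" by (intro eq_vecI) auto
    with v(2) show False unfolding vz by simp
  qed
  with null_vector_deflated_square_shift[OF cols N v(3)[unfolded vz]] that show thesis by blast
qed

lemma eigenvector_of_eigenvector_of_square:
  fixes A :: "real mat" and z :: "nat \<Rightarrow> real"
  assumes cols: "\<forall>j<N. (\<Sum>i<N. A $$ (i, j)) = 1"
    and z: "(\<Sum>i<N. z i) = 0" "\<exists>i<N. z i \<noteq> 0"
      "\<forall>i<N. mat_apply A N (mat_apply A N z) i = \<sigma>\<^sup>2 * z i"
  obtains \<mu> u where "\<bar>\<mu>\<bar> = \<bar>\<sigma>\<bar>" "(\<Sum>i<N. u i) = 0" "\<exists>i<N. u i \<noteq> 0"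
    "\<forall>i<N. mat_apply A N u i = \<mu> * u i"
proof (cases "\<forall>i<N. mat_apply A N z i + \<sigma> * z i = 0")
  case True
  then show ?thesis using z by (intro that[of "- \<sigma>" z]) (auto simp: algebra_simps)
next
  case False
  define w where "w i = mat_apply A N z i + \<sigma> * z i" for i
  have "(\<Sum>i<N. w i) = 0"
    unfolding w_def using z(1) sum_mat_apply[OF cols, of z] by (simp add: sum.distrib flip: sum_distrib_left)
  moreover have "mat_apply A N w i = \<sigma> * w i" if "i < N" for i
  proof -
    have "mat_apply A N w i = mat_apply A N (mat_apply A N z) i + \<sigma> * mat_apply A N z i"
      unfolding w_def mat_apply_def by (simp add: sum.distrib sum_distrib_left algebra_simps)
    then show ?thesis using z(3) that unfolding w_def by (simp add: algebra_simps power2_eq_square)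
  qed
  moreover have "\<exists>i<N. w i \<noteq> 0" using False unfolding w_def by auto
  ultimately show ?thesis by (intro that[of \<sigma> w]) auto
qed

lemma least_bound_sum_sq_norm_mat_apply:
  fixes A :: "real mat" and y :: "nat \<Rightarrow> real"
  assumes ds: "doubly_stochastic N A" and y: "(\<Sum>i<N. y i) = 0" "sum_sq_norm N y \<noteq> 0"
  obtains s where "\<forall>y :: nat \<Rightarrow> real. (\<Sum>i<N. y i) = 0 \<longrightarrow>
      sum_sq_norm N (mat_apply A N y) \<le> s * sum_sq_norm N y"
    and "\<forall>\<epsilon>>0. \<exists>y :: nat \<Rightarrow> real. (\<Sum>i<N. y i) = 0 \<and> sum_sq_norm N y = 1 \<and>
      s - \<epsilon> < sum_sq_norm N (mat_apply A N y)"
proof -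
  define F where "F y = sum_sq_norm N (mat_apply A N y)" for y :: "nat \<Rightarrow> real"
  define U where "U = {y :: nat \<Rightarrow> real. (\<Sum>i<N. y i) = 0 \<and> sum_sq_norm N y = 1}"
  define s where "s = (SUP y\<in>U. F y)"
  have "(\<lambda>i. (1 / sqrt (sum_sq_norm N y)) * y i) \<in> U"
    using y sum_sq_norm_scaleR[of N "1 / sqrt (sum_sq_norm N y)" y] sum_sq_norm_nonneg[of N y]
    unfolding U_def by (simp add: power_divide flip: sum_divide_distrib)
  then have U: "U \<noteq> {}" by blast
  have bdd: "bdd_above (F ` U)"
  proof (rule bdd_aboveI2)
    fix z assume "z \<in> U"
    then show "F z \<le> 1" using sum_sq_norm_mat_apply_le[OF ds, of z] unfolding U_def F_def by simp
  qed
  have "\<forall>y. (\<Sum>i<N. y i) = 0 \<longrightarrow> F y \<le> s * sum_sq_norm N y"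
    unfolding F_def by (intro allI impI sum_sq_norm_mat_apply_le_homogeneous)
      (use cSUP_upper[OF _ bdd] in \<open>auto simp: s_def U_def F_def\<close>)
  moreover have "\<forall>\<epsilon>>0. \<exists>y. (\<Sum>i<N. y i) = 0 \<and> sum_sq_norm N y = 1 \<and> s - \<epsilon> < F y"
  proof (intro allI impI)
    fix \<epsilon> :: real assume "0 < \<epsilon>"
    then obtain y where "y \<in> U" "s - \<epsilon> < F y"
      using less_cSUP_iff[OF U bdd, of "s - \<epsilon>"] unfolding s_def by auto
    then show "\<exists>y. (\<Sum>i<N. y i) = 0 \<and> sum_sq_norm N y = 1 \<and> s - \<epsilon> < F y"
      unfolding U_def by blast
  qed
  ultimately show thesis using that unfolding F_def by blast
qed

lemma abs_eigenvalue_le_beta_mat_apply: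
  fixes A :: "real mat" and u :: "nat \<Rightarrow> real"
  assumes A: "A \<in> carrier_mat N N" and sym: "\<forall>i<N. \<forall>j<N. A $$ (i, j) = A $$ (j, i)"
    and ds: "doubly_stochastic N A" and beta: "beta_mat N A < 1"
    and u: "(\<Sum>i<N. u i) = 0" "\<exists>i<N. u i \<noteq> 0" "\<forall>i<N. mat_apply A N u i = \<mu> * u i"
  shows "\<bar>\<mu>\<bar> \<le> beta_mat N A"
proof -
  have "(A *\<^sub>v vec N u) $ i = (\<mu> \<cdot>\<^sub>v vec N u) $ i" if "i < N" for i
    using mult_mat_vec_eq_mat_apply[OF A that, of u] u(3) that by simp
  then have "A *\<^sub>v vec N u = \<mu> \<cdot>\<^sub>v vec N u" using A by (intro eq_vecI) auto
  moreover have "vec N u \<noteq> 0\<^sub>v N" using u(2) by (metis index_vec index_zero_vec(1))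
  ultimately have ev: "eigenvector A (vec N u) \<mu>" unfolding eigenvector_def using A by auto
  have "(A *\<^sub>v vec N (\<lambda>_. 1)) $ i = vec N (\<lambda>_. 1) $ i" if "i < N" for i
    using mult_mat_vec_eq_mat_apply[OF A that, of "\<lambda>_. 1"] ds that
    by (simp add: mat_apply_def doubly_stochastic_def)
  then have ones: "A *\<^sub>v vec N (\<lambda>_. 1) = vec N (\<lambda>_. 1)" using A by (intro eq_vecI) auto
  have "(\<Sum>i<N. vec N u $ i) = 0" using u(1) by simp
  then show ?thesis by (rule abs_eigenvalue_le_beta_mat[OF A sym ones beta ev])
qed

lemma contraction_zero_sum_real:
  fixes A :: "real mat" and y :: "nat \<Rightarrow> real"
  assumes A: "A \<in> carrier_mat N N" and N: "0 < N"
    and sym: "\<forall>i<N. \<forall>j<N. A $$ (i, j) = A $$ (j, i)" and ds: "doubly_stochastic N A"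
    and beta: "beta_mat N A < 1" and y: "(\<Sum>i<N. y i) = 0"
  shows "sum_sq_norm N (mat_apply A N y) \<le> (beta_mat N A)\<^sup>2 * sum_sq_norm N y"
proof (rule ccontr)
  let ?\<beta> = "beta_mat N A"
  assume "\<not> ?thesis"
  then have y_big: "?\<beta>\<^sup>2 * sum_sq_norm N y < sum_sq_norm N (mat_apply A N y)" by simp
  have "sum_sq_norm N y \<noteq> 0"
  proof
    assume "sum_sq_norm N y = 0"
    moreover from this have "sum_sq_norm N (mat_apply A N y) = 0"
      unfolding mat_apply_def by (simp add: sum_sq_norm_eq_0_iff)
    ultimately show False using y_big by simp
  qed
  then obtain s where ub: "\<forall>y :: nat \<Rightarrow> real. (\<Sum>i<N. y i) = 0 \<longrightarrow>
      sum_sq_norm N (mat_apply A N y) \<le> s * sum_sq_norm N y"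
    and approx: "\<forall>\<epsilon>>0. \<exists>y :: nat \<Rightarrow> real. (\<Sum>i<N. y i) = 0 \<and> sum_sq_norm N y = 1 \<and>
      s - \<epsilon> < sum_sq_norm N (mat_apply A N y)"
    using least_bound_sum_sq_norm_mat_apply[OF ds y] by blast
  have "?\<beta>\<^sup>2 * sum_sq_norm N y < s * sum_sq_norm N y" using ub y y_big by force
  then have s: "?\<beta>\<^sup>2 < s" using sum_sq_norm_nonneg[of N y] by (simp add: mult_less_cancel_right)
  have "0 \<le> ?\<beta>\<^sup>2" by simp
  with s have s_pos: "0 < s" by linarith
  have cols: "\<forall>j<N. (\<Sum>i<N. A $$ (i, j)) = 1" using ds unfolding doubly_stochastic_def by blast
  obtain z where z: "(\<Sum>i<N. z i) = 0" "\<exists>i<N. z i \<noteq> 0"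
    "\<forall>i<N. mat_apply A N (mat_apply A N z) i = s * z i"
    using eigenvector_of_square_at_sup[OF N sym cols s_pos ub approx] .
  have z_sqrt: "\<forall>i<N. mat_apply A N (mat_apply A N z) i = (sqrt s)\<^sup>2 * z i"
    using z(3) s_pos by simp
  obtain \<mu> u where \<mu>: "\<bar>\<mu>\<bar> = sqrt s" and u: "(\<Sum>i<N. u i) = 0" "\<exists>i<N. u i \<noteq> 0"
    "\<forall>i<N. mat_apply A N u i = \<mu> * u i"
    using eigenvector_of_eigenvector_of_square[OF cols z(1,2) z_sqrt] s_pos by auto
  have "\<bar>\<mu>\<bar> \<le> ?\<beta>" by (rule abs_eigenvalue_le_beta_mat_apply[OF A sym ds beta u])
  moreover have "?\<beta> < sqrt s" using s by (rule real_less_rsqrt)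
  ultimately show False using \<mu> by simp
qed

lemma power2_norm_eq_sum_Basis: "(norm x)\<^sup>2 = (\<Sum>b\<in>Basis. (x \<bullet> b)\<^sup>2)"
  for x :: "'v::euclidean_space"
  by (subst power2_norm_eq_inner, subst euclidean_inner) (simp add: power2_eq_square)

lemma sum_sq_norm_eq_sum_Basis:
  fixes x :: "nat \<Rightarrow> 'v::euclidean_space"
  shows "sum_sq_norm N x = (\<Sum>b\<in>Basis. sum_sq_norm N (\<lambda>i. x i \<bullet> b))"
proof -
  have "sum_sq_norm N x = (\<Sum>i<N. \<Sum>b\<in>Basis. (x i \<bullet> b)\<^sup>2)"
    unfolding sum_sq_norm_def by (simp only: power2_norm_eq_sum_Basis)
  also have "\<dots> = (\<Sum>b\<in>Basis. \<Sum>i<N. (x i \<bullet> b)\<^sup>2)" by (rule sum.swap)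
  finally show ?thesis by (simp add: sum_sq_norm_real)
qed

lemma inner_mat_apply: "mat_apply A N x i \<bullet> b = mat_apply A N (\<lambda>j. x j \<bullet> b) i"
  by (simp add: mat_apply_def inner_sum_left)

lemma contraction_zero_sum:
  fixes A :: "real mat" and x :: "nat \<Rightarrow> 'v::euclidean_space"
  assumes "A \<in> carrier_mat N N" and "0 < N"
    and "\<forall>i<N. \<forall>j<N. A $$ (i, j) = A $$ (j, i)" and "doubly_stochastic N A"
    and "beta_mat N A < 1" and x: "(\<Sum>i<N. x i) = 0"
  shows "sum_sq_norm N (mat_apply A N x) \<le> (beta_mat N A)\<^sup>2 * sum_sq_norm N x"
proof -
  have Basis_le: "sum_sq_norm N (mat_apply A N (\<lambda>j. x j \<bullet> b))
      \<le> (beta_mat N A)\<^sup>2 * sum_sq_norm N (\<lambda>i. x i \<bullet> b)" for b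
    using x by (intro contraction_zero_sum_real[OF assms(1-5)]) (simp flip: inner_sum_left)
  have "sum_sq_norm N (mat_apply A N x) = (\<Sum>b\<in>Basis. sum_sq_norm N (mat_apply A N (\<lambda>j. x j \<bullet> b)))"
    unfolding sum_sq_norm_eq_sum_Basis[of N "mat_apply A N x"] inner_mat_apply ..
  also have "\<dots> \<le> (\<Sum>b\<in>Basis. (beta_mat N A)\<^sup>2 * sum_sq_norm N (\<lambda>i. x i \<bullet> b))"
    by (intro sum_mono Basis_le)
  also have "\<dots> = (beta_mat N A)\<^sup>2 * sum_sq_norm N x"
    unfolding sum_sq_norm_eq_sum_Basis[of N x] by (simp add: sum_distrib_left)
  finally show ?thesis .
qed

section \<open>Consensus error of Mono-DMFW\<close>

definition node_avg :: "nat \<Rightarrow> (nat \<Rightarrow> 'v::real_vector) \<Rightarrow> 'v" where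
  "node_avg N x = (1 / real N) *\<^sub>R (\<Sum>i<N. x i)"

definition consensus_error :: "nat \<Rightarrow> (nat \<Rightarrow> 'v::real_normed_vector) \<Rightarrow> real" where
  "consensus_error N x = sqrt (sum_sq_norm N (\<lambda>i. x i - node_avg N x))"

lemma consensus_error_cong:
  "(\<And>i. i < N \<Longrightarrow> x i = y i) \<Longrightarrow> consensus_error N x = consensus_error N y"
  unfolding consensus_error_def node_avg_def by (simp cong: sum_sq_norm_cong)

lemma consensus_error_add:
  "consensus_error N (\<lambda>i. x i + y i) \<le> consensus_error N x + consensus_error N y"
proof -
  let ?dx = "\<lambda>i. norm (x i - node_avg N x)" and ?dy = "\<lambda>i. norm (y i - node_avg N y)"
  have avg: "node_avg N (\<lambda>i. x i + y i) = node_avg N x + node_avg N y"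
    by (simp add: node_avg_def sum.distrib scaleR_add_right)
  have "consensus_error N (\<lambda>i. x i + y i)
      = L2_set (\<lambda>i. norm ((x i - node_avg N x) + (y i - node_avg N y))) {..<N}"
    unfolding consensus_error_def sum_sq_norm_def L2_set_def avg by (simp add: algebra_simps)
  also have "\<dots> \<le> L2_set (\<lambda>i. ?dx i + ?dy i) {..<N}"
    by (rule L2_set_mono) (auto intro: norm_triangle_ineq)
  also have "\<dots> \<le> L2_set ?dx {..<N} + L2_set ?dy {..<N}"
    by (rule L2_set_triangle_ineq)
  finally show ?thesis unfolding consensus_error_def sum_sq_norm_def L2_set_def .
qed

lemma consensus_error_scaleR: "consensus_error N (\<lambda>i. c *\<^sub>R x i) = \<bar>c\<bar> * consensus_error N x"
proof -
  have "node_avg N (\<lambda>i. c *\<^sub>R x i) = c *\<^sub>R node_avg N x"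
    by (simp add: node_avg_def scaleR_sum_right)
  then have "sum_sq_norm N (\<lambda>i. c *\<^sub>R x i - node_avg N (\<lambda>i. c *\<^sub>R x i))
      = c\<^sup>2 * sum_sq_norm N (\<lambda>i. x i - node_avg N x)"
    by (simp flip: sum_sq_norm_scaleR add: scaleR_diff_right)
  then show ?thesis unfolding consensus_error_def by (simp add: real_sqrt_mult)
qed

lemma consensus_error_le:
  fixes x :: "nat \<Rightarrow> 'v::real_inner"
  assumes "\<forall>i<N. norm (x i) \<le> r"
  shows "consensus_error N x \<le> sqrt (real N) * r"
proof (cases "N = 0")
  case True
  then show ?thesis by (simp add: consensus_error_def sum_sq_norm_def)
next
  case False
  define m where "m = node_avg N x"
  have sum_x: "(\<Sum>i<N. x i) = real N *\<^sub>R m" using False by (simp add: m_def node_avg_def)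
  have r: "0 \<le> r" using assms False by (meson norm_ge_zero order_trans zero_less_iff_neq_zero)
  have "sum_sq_norm N (\<lambda>i. x i - m) = (\<Sum>i<N. (norm (x i))\<^sup>2) - 2 * ((\<Sum>i<N. x i) \<bullet> m) + real N * (norm m)\<^sup>2"
    unfolding sum_sq_norm_def
    by (simp add: power2_norm_eq_inner inner_diff_left inner_diff_right inner_commute
        sum.distrib sum_subtractf inner_sum_left inner_sum_right sum_distrib_left algebra_simps)
  also have "\<dots> = (\<Sum>i<N. (norm (x i))\<^sup>2) - real N * (norm m)\<^sup>2"
    unfolding sum_x by (simp add: power2_norm_eq_inner)
  also have "\<dots> \<le> (\<Sum>i<N. (norm (x i))\<^sup>2)" by simp
  also have "\<dots> \<le> (\<Sum>i<N. r\<^sup>2)" using assms by (intro sum_mono power_mono) auto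
  finally have "sum_sq_norm N (\<lambda>i. x i - m) \<le> (sqrt (real N) * r)\<^sup>2"
    by (simp add: power_mult_distrib)
  then show ?thesis unfolding consensus_error_def m_def[symmetric] using r by (intro real_le_lsqrt) auto
qed

lemma consensus_error_mat_apply_le:
  fixes A :: "real mat" and x :: "nat \<Rightarrow> 'v::euclidean_space"
  assumes A: "A \<in> carrier_mat N N" and N: "0 < N"
    and sym: "\<forall>i<N. \<forall>j<N. A $$ (i, j) = A $$ (j, i)" and ds: "doubly_stochastic N A"
    and beta: "beta_mat N A < 1"
  shows "consensus_error N (mat_apply A N x) \<le> beta_mat N A * consensus_error N x"
proof -
  define d where "d j = x j - node_avg N x" for j
  have rows: "\<forall>i<N. (\<Sum>j<N. A $$ (i, j)) = 1" and cols: "\<forall>j<N. (\<Sum>i<N. A $$ (i, j)) = 1"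
    using ds unfolding doubly_stochastic_def by blast+
  have "node_avg N (mat_apply A N x) = node_avg N x"
    unfolding node_avg_def sum_mat_apply[OF cols] ..
  then have dev: "mat_apply A N x i - node_avg N (mat_apply A N x) = mat_apply A N d i" if "i < N" for i
    using rows that unfolding d_def mat_apply_def
    by (simp add: scaleR_diff_right sum_subtractf flip: scaleR_sum_left)
  have "(\<Sum>j<N. d j) = 0" using N unfolding d_def node_avg_def by (simp add: sum_subtractf sum_constant_scaleR)
  then have "sum_sq_norm N (mat_apply A N d) \<le> (beta_mat N A)\<^sup>2 * sum_sq_norm N d"
    by (rule contraction_zero_sum[OF A N sym ds beta])
  then have "consensus_error N (mat_apply A N x) \<le> sqrt ((beta_mat N A)\<^sup>2 * sum_sq_norm N d)"
    unfolding consensus_error_def using dev by (simp cong: sum_sq_norm_cong)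
  also have "\<dots> = beta_mat N A * consensus_error N x"
    unfolding consensus_error_def d_def by (simp add: real_sqrt_mult beta_mat_def)
  finally show ?thesis .
qed

lemma affine_recurrence_le:
  fixes e :: "nat \<Rightarrow> real"
  assumes "e 0 \<le> c / (1 - \<beta>)" and "\<forall>k<n. e (Suc k) \<le> \<beta> * e k + c" and "0 \<le> \<beta>" "\<beta> < 1"
  shows "e n \<le> c / (1 - \<beta>)"
  using assms(1,2)
proof (induction n)
  case (Suc n)
  then have "e n \<le> c / (1 - \<beta>)" by simp
  then have "\<beta> * e n \<le> \<beta> * (c / (1 - \<beta>))" using assms(3) by (rule mult_left_mono)
  moreover have "e (Suc n) \<le> \<beta> * e n + c" using Suc.prems(2) by simp
  moreover have "\<beta> * (c / (1 - \<beta>)) + c = c / (1 - \<beta>)" using assms(4) by (simp add: field_simps)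
  ultimately show ?case by linarith
qed simp

lemma dmfw_x_Suc:
  assumes "undirected_graph N Nb" and "\<forall>i<N. \<forall>j<N. j \<notin> Nb i \<union> {i} \<longrightarrow> A $$ (i, j) = 0"
    and "i < N"
  shows "dmfw_x A Nb K v q (Suc k) i
    = mat_apply A N (dmfw_x A Nb K v q k) i + (1 / real K) *\<^sub>R v q (Suc k) i"
proof -
  have "Nb i \<union> {i} \<subseteq> {..<N}" using assms(1,3) unfolding undirected_graph_def by auto
  then have "(\<Sum>j\<in>Nb i \<union> {i}. A $$ (i, j) *\<^sub>R dmfw_x A Nb K v q k j) = mat_apply A N (dmfw_x A Nb K v q k) i"
    unfolding mat_apply_def by (intro sum.mono_neutral_left) (use assms(2,3) in auto)
  then show ?thesis by simp
qed

lemma consensus_error_dmfw_x_Suc_le: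
  fixes A :: "real mat" and v :: "nat \<Rightarrow> nat \<Rightarrow> nat \<Rightarrow> 'v::euclidean_space"
  assumes graph: "undirected_graph N Nb"
    and local: "\<forall>i<N. \<forall>j<N. j \<notin> Nb i \<union> {i} \<longrightarrow> A $$ (i, j) = 0"
    and A: "A \<in> carrier_mat N N" and N: "0 < N"
    and sym: "\<forall>i<N. \<forall>j<N. A $$ (i, j) = A $$ (j, i)" and ds: "doubly_stochastic N A"
    and beta: "beta_mat N A < 1" and v: "\<forall>i<N. norm (v q (Suc k) i) \<le> r"
  shows "consensus_error N (dmfw_x A Nb K v q (Suc k))
    \<le> beta_mat N A * consensus_error N (dmfw_x A Nb K v q k) + sqrt (real N) * r / real K"
proof -
  let ?x = "dmfw_x A Nb K v q k"
  have "consensus_error N (dmfw_x A Nb K v q (Suc k))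
      = consensus_error N (\<lambda>i. mat_apply A N ?x i + (1 / real K) *\<^sub>R v q (Suc k) i)"
    by (intro consensus_error_cong dmfw_x_Suc[OF graph local])
  also have "\<dots> \<le> consensus_error N (mat_apply A N ?x)
      + consensus_error N (\<lambda>i. (1 / real K) *\<^sub>R v q (Suc k) i)"
    by (rule consensus_error_add)
  also have "consensus_error N (mat_apply A N ?x) \<le> beta_mat N A * consensus_error N ?x"
    by (rule consensus_error_mat_apply_le[OF A N sym ds beta])
  also have "consensus_error N (\<lambda>i. (1 / real K) *\<^sub>R v q (Suc k) i) \<le> sqrt (real N) * r / real K"
    using consensus_error_le[OF v] by (simp add: consensus_error_scaleR divide_right_mono)
  finally show ?thesis by simp
qed

lemma consensus_error_dmfw_x_le:
  fixes A :: "real mat" and v :: "nat \<Rightarrow> nat \<Rightarrow> nat \<Rightarrow> 'v::euclidean_space"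
  assumes "undirected_graph N Nb" and "\<forall>i<N. \<forall>j<N. j \<notin> Nb i \<union> {i} \<longrightarrow> A $$ (i, j) = 0"
    and "A \<in> carrier_mat N N" and "0 < N"
    and "\<forall>i<N. \<forall>j<N. A $$ (i, j) = A $$ (j, i)" and "doubly_stochastic N A"
    and beta: "beta_mat N A < 1" and r: "0 \<le> r"
    and v: "\<forall>k'<k. \<forall>i<N. norm (v q (Suc k') i) \<le> r"
  shows "consensus_error N (dmfw_x A Nb K v q k) \<le> sqrt (real N) * r / real K / (1 - beta_mat N A)"
proof (rule affine_recurrence_le[where e = "\<lambda>k. consensus_error N (dmfw_x A Nb K v q k)"])
  have "0 \<le> sqrt (real N) * r / real K / (1 - beta_mat N A)"
    using r beta by (intro divide_nonneg_nonneg) auto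
  then show "consensus_error N (dmfw_x A Nb K v q 0) \<le> sqrt (real N) * r / real K / (1 - beta_mat N A)"
    by (simp add: consensus_error_def node_avg_def sum_sq_norm_def)
  show "\<forall>k'<k. consensus_error N (dmfw_x A Nb K v q (Suc k'))
      \<le> beta_mat N A * consensus_error N (dmfw_x A Nb K v q k') + sqrt (real N) * r / real K"
    using consensus_error_dmfw_x_Suc_le[OF assms(1-7)] v by blast
qed (use beta in \<open>simp_all add: beta_mat_def\<close>)

lemma norm_le_rK: "bounded S \<Longrightarrow> x \<in> S \<Longrightarrow> norm x \<le> rK S"
  unfolding rK_def by (intro cSUP_upper) (auto simp: bounded_iff bdd_above_def)

theorem lemma3:
  fixes N K Q :: nat
    and Kset :: "'v::euclidean_space set"
    and Nb :: "nat \<Rightarrow> nat set"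
    and A :: "real mat"
    and v :: "nat \<Rightarrow> nat \<Rightarrow> nat \<Rightarrow> 'v"
  assumes "N \<ge> 1" and "K \<ge> 1"
    and "convex Kset" and "bounded Kset"
    and "undirected_graph N Nb" and "connected_graph N Nb"
    and "A \<in> carrier_mat N N"
    and "\<forall>i<N. \<forall>j<N. A $$ (i, j) \<ge> 0"
    and "\<forall>i<N. \<forall>j<N. j \<notin> Nb i \<union> {i} \<longrightarrow> A $$ (i, j) = 0"
    and "A = transpose_mat A"
    and "\<forall>i<N. (\<Sum>j<N. A $$ (i, j)) = 1"
    and "\<forall>j<N. (\<Sum>i<N. A $$ (i, j)) = 1"
    and "beta_mat N A < 1"
    and "\<forall>q\<in>{1..Q}. \<forall>k\<in>{1..K}. \<forall>i<N. v q k i \<in> Kset"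
    and "k \<in> {1..K}" and "q \<in> {1..Q}"
  shows "sqrt (\<Sum>i<N. (norm (dmfw_x A Nb K v q k i
            - (1 / real N) *\<^sub>R (\<Sum>l<N. dmfw_x A Nb K v q k l)))\<^sup>2)
         \<le> sqrt (real N) * rK Kset / (real K * (1 - beta_mat N A))"
proof -
  have A: "A \<in> carrier_mat N N" and N: "0 < N" using assms(1,7) by auto
  have sym: "\<forall>i<N. \<forall>j<N. A $$ (i, j) = A $$ (j, i)"
    using assms(10) A by (metis carrier_matD index_transpose_mat(1))
  have ds: "doubly_stochastic N A" using assms(8,11,12) unfolding doubly_stochastic_def by blast
  have v: "\<forall>k'<k. \<forall>i<N. norm (v q (Suc k') i) \<le> rK Kset"
    using assms(14-16) by (auto intro: norm_le_rK[OF assms(4)])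
  then have "norm (v q (Suc 0) 0) \<le> rK Kset" using assms(15) N by auto
  then have "0 \<le> rK Kset" by (meson norm_ge_zero order_trans)
  from consensus_error_dmfw_x_le[where v = v and q = q and K = K, OF assms(5,9) A N sym ds assms(13) this v]
  show ?thesis unfolding consensus_error_def sum_sq_norm_def node_avg_def divide_divide_eq_left .
qed

end
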